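(* In the $\mathbf N$-agent system with dependence on marginal distributions described in the context, let $\{\boldsymbol\mu_t^{\mathbf N},\boldsymbol\nu_t^{\mathbf N}\}_{t\ge0}$ be the empirical joint state and action distributions induced by a policy $\boldsymbol\pi=\{\boldsymbol\pi_t\}_{t\ge0}$. Then for every $t\ge0$: (a) $\mathbb E|\boldsymbol\nu_t^{\mathbf N}[\mathcal U]-\nu^{\mathrm{MF}}(\boldsymbol\mu_t^{\mathbf N},\boldsymbol\pi_t)[\mathcal U]|_1\le\frac1{\sqrt{N_{\mathrm{pop}}}}\sqrt{|\mathcal U|}$; (b) $\mathbb E\Big|\frac1{N_{\mathrm{pop}}}\sum_{k\in[K]}\sum_{j=1}^{N_k}r_k(x_{j,k}^t,u_{j,k}^t,\boldsymbol\mu_t^{\mathbf N}[\mathcal X],\boldsymbol\nu_t^{\mathbf N}[\mathcal U])-\sum_{k\in[K]}r_k^{\mathrm{MF}}(\boldsymbol\mu_t^{\mathbf N},\boldsymbol\pi_t)\Big|\le\frac{C_R}{\sqrt{N_{\mathrm{pop}}}}\sqrt{|\mathcal U|}$; (c) $\mathbb E|\boldsymbol\mu_{t+1}^{\mathbf N}[\mathcal X]-P^{\mathrm{MF}}(\boldsymbol\mu_t^{\mathbf N},\boldsymbol\pi_t)[\mathcal X]|_1\le\frac{C_P}{\sqrt{N_{\mathrm{pop}}}}\sqrt{|\mathcal X||\mathcal U|}$, where $C_R=M_R+L_R$ and $C_P=2+L_P$.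
   Context: Fix $K\ge1$, $N_1,\dots,N_K\ge1$, $[K]=\{1,\dots,K\}$, $N_{\mathrm{pop}}=\sum_kN_k$, finite sets $\mathcal X,\mathcal U$, $\mathcal P(A)$ the probability distributions on $A$, $|\cdot|_1$ the $L_1$ norm, constants $M_R,L_R,L_P>0$. Agent $j\in[N_k]$ of class $k$ has state $x_{j,k}^t$ and action $u_{j,k}^t$; $\boldsymbol\mu_t^{\mathbf N}(x,k)=\frac1{N_{\mathrm{pop}}}\sum_{j=1}^{N_k}\mathbf 1(x_{j,k}^t=x)$, $\boldsymbol\nu_t^{\mathbf N}(u,k)=\frac1{N_{\mathrm{pop}}}\sum_{j=1}^{N_k}\mathbf 1(u_{j,k}^t=u)$; marginals $\boldsymbol\mu[\mathcal X](x)=\sum_k\boldsymbol\mu(x,k)$, $\boldsymbol\nu[\mathcal U](u)=\sum_k\boldsymbol\nu(u,k)$. For each $k$: $r_k:\mathcal X\times\mathcal U\times\mathcal P(\mathcal X)\times\mathcal P(\mathcal U)\to\mathbb R$, $P_k:\mathcal X\times\mathcal U\times\mathcal P(\mathcal X)\times\mathcal P(\mathcal U)\to\mathcal P(\mathcal X)$ with $|r_k|\le M_R$, $|r_k(x,u,\mu_1,\nu_1)-r_k(x,u,\mu_2,\nu_2)|\le L_R(|\mu_1-\mu_2|_1+|\nu_1-\nu_2|_1)$, $|P_k(x,u,\mu_1,\nu_1)-P_k(x,u,\mu_2,\nu_2)|_1\le L_P(|\mu_1-\mu_2|_1+|\nu_1-\nu_2|_1)$. A policy is $\boldsymbol\pi=\{\boldsymbol\pi_t\}_{t\ge0}$,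 $\boldsymbol\pi_t=(\pi_k^t)_k$, $\pi_k^t:\mathcal X\times\mathcal P(\mathcal X)\to\mathcal P(\mathcal U)$. Dynamics: conditioned on all states at time $t$, actions are independent across agents with $u_{j,k}^t\sim\pi_k^t(x_{j,k}^t,\boldsymbol\mu_t^{\mathbf N}[\mathcal X])$; conditioned on states and actions, next states are independent with $x_{j,k}^{t+1}\sim P_k(x_{j,k}^t,u_{j,k}^t,\boldsymbol\mu_t^{\mathbf N}[\mathcal X],\boldsymbol\nu_t^{\mathbf N}[\mathcal U])$. Mean-field operators: $\nu^{\mathrm{MF}}(\boldsymbol\mu,\boldsymbol\pi)(u,k)=\sum_x\pi_k(x,\boldsymbol\mu[\mathcal X])(u)\boldsymbol\mu(x,k)$; $P^{\mathrm{MF}}(\boldsymbol\mu,\boldsymbol\pi)(x',k)=\sum_{x,u}\boldsymbol\mu(x,k)\pi_k(x,\boldsymbol\mu[\mathcal X])(u)P_k(x,u,\boldsymbol\mu[\mathcal X],\nu^{\mathrm{MF}}(\boldsymbol\mu,\boldsymbol\pi)[\mathcal U])(x')$; $r_k^{\mathrm{MF}}(\boldsymbol\mu,\boldsymbol\pi)=\sum_{x,u}\boldsymbol\mu(x,k)\pi_k(x,\boldsymbol\mu[\mathcal X])(u)r_k(x,u,\boldsymbol\mu[\mathcal X],\nu^{\mathrm{MF}}(\boldsymbol\mu,\boldsymbol\pi)[\mathcal U])$. *)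

theory Defs
  imports "HOL-Probability.Product_PMF"
begin

text \<open>Classes are indexed by k in {0..<K} (0-based), agent j of class k by j in {0..<N k}. A joint configuration (of states or actions) is a function
  from agents to values. Distributions on a finite type are real-valued functions.\<close>

definition agents :: "nat \<Rightarrow> (nat \<Rightarrow> nat) \<Rightarrow> (nat \<times> nat) set" where
  "agents K N = {(k, j). k < K \<and> j < N k}"

definition Npop :: "nat \<Rightarrow> (nat \<Rightarrow> nat) \<Rightarrow> nat" where
  "Npop K N = (\<Sum>k<K. N k)"

definition emp :: "nat \<Rightarrow> (nat \<Rightarrow> nat) \<Rightarrow> (nat \<times> nat \<Rightarrow> 'a) \<Rightarrow> 'a \<Rightarrow> nat \<Rightarrow> real" where
  "emp K N s = (\<lambda>x k. real (card {j. j < N k \<and> s (k, j) = x}) / real (Npop K N))"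

definition marg :: "nat \<Rightarrow> ('a \<Rightarrow> nat \<Rightarrow> real) \<Rightarrow> 'a \<Rightarrow> real" where
  "marg K mu = (\<lambda>x. \<Sum>k<K. mu x k)"

definition l1 :: "('a::finite \<Rightarrow> real) \<Rightarrow> ('a \<Rightarrow> real) \<Rightarrow> real" where
  "l1 f g = (\<Sum>x\<in>UNIV. \<bar>f x - g x\<bar>)"

definition is_dist :: "('a::finite \<Rightarrow> real) \<Rightarrow> bool" where
  "is_dist f \<longleftrightarrow> (\<forall>x. 0 \<le> f x) \<and> sum f UNIV = 1"

text \<open>Mean-field operators; pol is a one-step policy (class, state, marginal state dist).\<close>
definition nuMF :: "nat \<Rightarrow> (nat \<Rightarrow> 'x::finite \<Rightarrow> ('x \<Rightarrow> real) \<Rightarrow> 'u pmf)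
    \<Rightarrow> ('x \<Rightarrow> nat \<Rightarrow> real) \<Rightarrow> 'u \<Rightarrow> nat \<Rightarrow> real" where
  "nuMF K pol mu = (\<lambda>u k. \<Sum>x\<in>UNIV. pmf (pol k x (marg K mu)) u * mu x k)"

definition PMF :: "nat \<Rightarrow> (nat \<Rightarrow> 'x::finite \<Rightarrow> 'u::finite \<Rightarrow> ('x \<Rightarrow> real) \<Rightarrow> ('u \<Rightarrow> real) \<Rightarrow> 'x pmf)
    \<Rightarrow> (nat \<Rightarrow> 'x \<Rightarrow> ('x \<Rightarrow> real) \<Rightarrow> 'u pmf)
    \<Rightarrow> ('x \<Rightarrow> nat \<Rightarrow> real) \<Rightarrow> 'x \<Rightarrow> nat \<Rightarrow> real" where
  "PMF K P pol mu = (\<lambda>x' k. \<Sum>x\<in>UNIV. \<Sum>u\<in>UNIV.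
      mu x k * pmf (pol k x (marg K mu)) u
        * pmf (P k x u (marg K mu) (marg K (nuMF K pol mu))) x')"

definition rMF :: "nat \<Rightarrow> (nat \<Rightarrow> 'x::finite \<Rightarrow> 'u::finite \<Rightarrow> ('x \<Rightarrow> real) \<Rightarrow> ('u \<Rightarrow> real) \<Rightarrow> real)
    \<Rightarrow> (nat \<Rightarrow> 'x \<Rightarrow> ('x \<Rightarrow> real) \<Rightarrow> 'u pmf)
    \<Rightarrow> ('x \<Rightarrow> nat \<Rightarrow> real) \<Rightarrow> nat \<Rightarrow> real" where
  "rMF K r pol mu k = (\<Sum>x\<in>UNIV. \<Sum>u\<in>UNIV.
      mu x k * pmf (pol k x (marg K mu)) u
        * r k x u (marg K mu) (marg K (nuMF K pol mu)))"

text \<open>Values outside the agent set are irrelevant (fixed to undefined).\<close>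
definition act_pmf :: "nat \<Rightarrow> (nat \<Rightarrow> nat) \<Rightarrow> (nat \<Rightarrow> nat \<Rightarrow> 'x \<Rightarrow> ('x \<Rightarrow> real) \<Rightarrow> 'u pmf)
    \<Rightarrow> nat \<Rightarrow> (nat \<times> nat \<Rightarrow> 'x) \<Rightarrow> (nat \<times> nat \<Rightarrow> 'u) pmf" where
  "act_pmf K N pol t s = Pi_pmf (agents K N) undefined
      (\<lambda>(k, j). pol t k (s (k, j)) (marg K (emp K N s)))"

definition next_pmf :: "nat \<Rightarrow> (nat \<Rightarrow> nat) \<Rightarrow> (nat \<Rightarrow> 'x \<Rightarrow> 'u \<Rightarrow> ('x \<Rightarrow> real) \<Rightarrow> ('u \<Rightarrow> real) \<Rightarrow> 'x pmf)
    \<Rightarrow> (nat \<times> nat \<Rightarrow> 'x) \<Rightarrow> (nat \<times> nat \<Rightarrow> 'u) \<Rightarrow> (nat \<times> nat \<Rightarrow> 'x) pmf" where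
  "next_pmf K N P s a = Pi_pmf (agents K N) undefined
      (\<lambda>(k, j). P k (s (k, j)) (a (k, j)) (marg K (emp K N s)) (marg K (emp K N a)))"

primrec state_pmf :: "nat \<Rightarrow> (nat \<Rightarrow> nat) \<Rightarrow> (nat \<Rightarrow> 'x \<Rightarrow> 'u \<Rightarrow> ('x \<Rightarrow> real) \<Rightarrow> ('u \<Rightarrow> real) \<Rightarrow> 'x pmf)
    \<Rightarrow> (nat \<Rightarrow> nat \<Rightarrow> 'x \<Rightarrow> ('x \<Rightarrow> real) \<Rightarrow> 'u pmf) \<Rightarrow> (nat \<times> nat \<Rightarrow> 'x) pmf
    \<Rightarrow> nat \<Rightarrow> (nat \<times> nat \<Rightarrow> 'x) pmf" where
  "state_pmf K N P pol init 0 = init"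
| "state_pmf K N P pol init (Suc t) =
     bind_pmf (state_pmf K N P pol init t)
       (\<lambda>s. bind_pmf (act_pmf K N pol t s) (\<lambda>a. next_pmf K N P s a))"

definition joint_pmf :: "nat \<Rightarrow> (nat \<Rightarrow> nat) \<Rightarrow> (nat \<Rightarrow> 'x \<Rightarrow> 'u \<Rightarrow> ('x \<Rightarrow> real) \<Rightarrow> ('u \<Rightarrow> real) \<Rightarrow> 'x pmf)
    \<Rightarrow> (nat \<Rightarrow> nat \<Rightarrow> 'x \<Rightarrow> ('x \<Rightarrow> real) \<Rightarrow> 'u pmf) \<Rightarrow> (nat \<times> nat \<Rightarrow> 'x) pmf
    \<Rightarrow> nat \<Rightarrow> ((nat \<times> nat \<Rightarrow> 'x) \<times> (nat \<times> nat \<Rightarrow> 'u) \<times> (nat \<times> nat \<Rightarrow> 'x)) pmf" where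
  "joint_pmf K N P pol init t =
     bind_pmf (state_pmf K N P pol init t)
       (\<lambda>s. bind_pmf (act_pmf K N pol t s)
         (\<lambda>a. map_pmf (\<lambda>s'. (s, a, s')) (next_pmf K N P s a)))"

end

theory Submission
  imports Defs
begin

text \<open>Conditionally on the states at time t, the actions are independent across agents, and so
  are the next states given states and actions. Each of the three quantities is therefore, up to a
  correction, the deviation of an average of Npop independent random vectors from its mean:
  coordinatewise the expected absolute deviation is at most the standard deviation, the variances
  of independent summands add up, and Cauchy-Schwarz over the coordinates yields the rate
  sqrt(card U / Npop) (resp. sqrt(card X / Npop)). In (b) and (c) the empirical action marginal
  that enters r and P is first replaced by the mean-field one, at a cost bounded through the
  Lipschitz constants and (a); (c) needs a second concentration step, over the next states given
  the actions.\<close>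

section \<open>Expectations and concentration for finite PMFs\<close>

lemma integrable_measure_pmf_finite_type [simp]:
  "integrable (measure_pmf (p :: 'a::finite pmf)) (f :: 'a \<Rightarrow> real)"
  by (rule integrable_measure_pmf_finite) simp

lemma finite_set_Pi_pmf:
  "finite I \<Longrightarrow> finite (set_pmf (Pi_pmf I d (p :: _ \<Rightarrow> 'b::finite pmf)))"
  by (subst set_Pi_pmf) (auto intro!: finite_PiE_dflt)

lemma integrable_Pi_pmf_finite_type [simp]:
  "finite I \<Longrightarrow> integrable (measure_pmf (Pi_pmf I d (p :: _ \<Rightarrow> 'b::finite pmf))) (f :: _ \<Rightarrow> real)"
  by (rule integrable_measure_pmf_finite[OF finite_set_Pi_pmf])

lemma expectation_bind_pmf_finite:
  fixes h :: "_ \<Rightarrow> real"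
  assumes "finite (set_pmf M)" "\<And>x. x \<in> set_pmf M \<Longrightarrow> finite (set_pmf (N x))"
  shows "measure_pmf.expectation (bind_pmf M N) h
       = measure_pmf.expectation M (\<lambda>x. measure_pmf.expectation (N x) h)"
proof -
  have "measure_pmf.expectation (bind_pmf M N) h
      = (\<Sum>x\<in>set_pmf M. pmf M x *\<^sub>R measure_pmf.expectation (N x) h)"
    by (rule pmf_expectation_bind) (use assms in auto)
  also have "\<dots> = measure_pmf.expectation M (\<lambda>x. measure_pmf.expectation (N x) h)"
    by (subst integral_measure_pmf[OF assms(1)]) auto
  finally show ?thesis .
qed

text \<open>The law of the states at time t may have infinite support, hence the detour through the
  nonnegative integral.\<close>

lemma expectation_bind_pmf_le:
  fixes g :: "_ \<Rightarrow> real"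
  assumes nonneg: "\<And>y. 0 \<le> g y"
    and integrable: "\<And>x. x \<in> set_pmf M \<Longrightarrow> integrable (measure_pmf (N x)) g"
    and bound: "\<And>x. x \<in> set_pmf M \<Longrightarrow> measure_pmf.expectation (N x) g \<le> c"
  shows "measure_pmf.expectation (bind_pmf M N) g \<le> c"
proof -
  obtain x0 where x0: "x0 \<in> set_pmf M"
    by (meson ex_in_conv set_pmf_not_empty)
  have "0 \<le> c"
    using order_trans[OF Bochner_Integration.integral_nonneg[OF nonneg] bound[OF x0]] .
  have "(\<integral>\<^sup>+y. ennreal (g y) \<partial>bind_pmf M N) = (\<integral>\<^sup>+x. \<integral>\<^sup>+y. ennreal (g y) \<partial>N x \<partial>M)"
    by simp
  also have "\<dots> \<le> (\<integral>\<^sup>+x. ennreal c \<partial>M)"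
  proof (rule nn_integral_mono_AE, rule AE_pmfI)
    fix x assume x: "x \<in> set_pmf M"
    have "(\<integral>\<^sup>+y. ennreal (g y) \<partial>N x) = ennreal (measure_pmf.expectation (N x) g)"
      by (rule nn_integral_eq_integral) (use integrable[OF x] nonneg in auto)
    also have "\<dots> \<le> ennreal c"
      using bound[OF x] by (rule ennreal_leI)
    finally show "(\<integral>\<^sup>+y. ennreal (g y) \<partial>N x) \<le> ennreal c" .
  qed
  also have "\<dots> = ennreal c"
    by (simp add: measure_pmf.emeasure_space_1)
  finally have "(\<integral>\<^sup>+y. ennreal (g y) \<partial>bind_pmf M N) \<le> ennreal c" .
  then have "enn2real (\<integral>\<^sup>+y. ennreal (g y) \<partial>bind_pmf M N) \<le> c"
    using \<open>0 \<le> c\<close> by (simp add: enn2real_leI)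
  then show ?thesis
    by (subst integral_eq_nn_integral) (use nonneg in auto)
qed

lemma expectation_abs_le_sqrt_expectation_square:
  fixes Z :: "_ \<Rightarrow> real"
  assumes "integrable (measure_pmf M) Z" "integrable (measure_pmf M) (\<lambda>\<omega>. (Z \<omega>)\<^sup>2)"
  shows "measure_pmf.expectation M (\<lambda>\<omega>. \<bar>Z \<omega>\<bar>) \<le> sqrt (measure_pmf.expectation M (\<lambda>\<omega>. (Z \<omega>)\<^sup>2))"
proof (rule real_le_rsqrt)
  have "0 \<le> measure_pmf.variance M (\<lambda>\<omega>. \<bar>Z \<omega>\<bar>)"
    by (rule measure_pmf.variance_positive)
  also have "\<dots> = measure_pmf.expectation M (\<lambda>\<omega>. (Z \<omega>)\<^sup>2) - (measure_pmf.expectation M (\<lambda>\<omega>. \<bar>Z \<omega>\<bar>))\<^sup>2"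
    by (subst measure_pmf.variance_eq) (use assms in auto)
  finally show "(measure_pmf.expectation M (\<lambda>\<omega>. \<bar>Z \<omega>\<bar>))\<^sup>2 \<le> measure_pmf.expectation M (\<lambda>\<omega>. (Z \<omega>)\<^sup>2)"
    by simp
qed

lemma expectation_square_sum_Pi_pmf:
  fixes g :: "'i \<Rightarrow> 'b::finite \<Rightarrow> real"
  assumes "finite I" "\<And>i. i \<in> I \<Longrightarrow> measure_pmf.expectation (p i) (g i) = 0"
  shows "measure_pmf.expectation (Pi_pmf I d p) (\<lambda>\<omega>. (\<Sum>i\<in>I. g i (\<omega> i))\<^sup>2)
       = (\<Sum>i\<in>I. measure_pmf.expectation (p i) (\<lambda>b. (g i b)\<^sup>2))"
  using assms
proof (induction I rule: finite_induct)
  case empty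
  then show ?case by simp
next
  case (insert x F)
  let ?S = "\<lambda>f. \<Sum>i\<in>F. g i (f i)"
  have centered: "measure_pmf.expectation (Pi_pmf F d p) ?S = 0"
  proof -
    have "measure_pmf.expectation (Pi_pmf F d p) ?S
        = (\<Sum>i\<in>F. measure_pmf.expectation (map_pmf (\<lambda>f. f i) (Pi_pmf F d p)) (g i))"
      by (simp add: Bochner_Integration.integral_sum insert.hyps)
    also have "\<dots> = 0"
      using insert by (simp add: Pi_pmf_component)
    finally show ?thesis .
  qed
  have sum_upd: "(\<Sum>i\<in>F. g i ((f(x := y)) i)) = ?S f" for f y
    using insert.hyps by (intro sum.cong) auto
  have "measure_pmf.expectation (Pi_pmf (insert x F) d p) (\<lambda>\<omega>. (\<Sum>i\<in>insert x F. g i (\<omega> i))\<^sup>2)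
      = measure_pmf.expectation (p x) (\<lambda>y. measure_pmf.expectation (Pi_pmf F d p) (\<lambda>f. (g x y + ?S f)\<^sup>2))"
    by (simp add: Pi_pmf_insert' insert.hyps expectation_bind_pmf_finite finite_set_Pi_pmf sum_upd
        fun_upd_same del: fun_upd_apply)
  also have "\<dots> = measure_pmf.expectation (p x)
      (\<lambda>y. (g x y)\<^sup>2 + measure_pmf.expectation (Pi_pmf F d p) (\<lambda>f. (?S f)\<^sup>2))"
    by (simp add: power2_sum insert.hyps centered)
  also have "\<dots> = (\<Sum>i\<in>insert x F. measure_pmf.expectation (p i) (\<lambda>b. (g i b)\<^sup>2))"
    using insert by simp
  finally show ?case .
qed

lemma expectation_abs_centered_sum_Pi_pmf_le:
  fixes f :: "'i \<Rightarrow> 'b::finite \<Rightarrow> real"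
  assumes "finite I"
  shows "measure_pmf.expectation (Pi_pmf I d p)
      (\<lambda>\<omega>. \<bar>\<Sum>i\<in>I. f i (\<omega> i) - measure_pmf.expectation (p i) (f i)\<bar>)
    \<le> sqrt (\<Sum>i\<in>I. measure_pmf.expectation (p i) (\<lambda>b. (f i b)\<^sup>2))"
proof -
  let ?g = "\<lambda>i b. f i b - measure_pmf.expectation (p i) (f i)"
  have "measure_pmf.expectation (Pi_pmf I d p) (\<lambda>\<omega>. \<bar>\<Sum>i\<in>I. ?g i (\<omega> i)\<bar>)
      \<le> sqrt (measure_pmf.expectation (Pi_pmf I d p) (\<lambda>\<omega>. (\<Sum>i\<in>I. ?g i (\<omega> i))\<^sup>2))"
    by (rule expectation_abs_le_sqrt_expectation_square) (simp_all add: assms)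
  also have "\<dots> = sqrt (\<Sum>i\<in>I. measure_pmf.variance (p i) (f i))"
    by (subst expectation_square_sum_Pi_pmf) (simp_all add: assms)
  also have "\<dots> \<le> sqrt (\<Sum>i\<in>I. measure_pmf.expectation (p i) (\<lambda>b. (f i b)\<^sup>2))"
    by (intro real_sqrt_le_mono sum_mono) (simp add: measure_pmf.variance_eq)
  finally show ?thesis .
qed

lemma sum_sqrt_le_sqrt_card_mult_sum:
  fixes v :: "'c \<Rightarrow> real"
  assumes "\<And>c. c \<in> C \<Longrightarrow> 0 \<le> v c"
  shows "(\<Sum>c\<in>C. sqrt (v c)) \<le> sqrt (real (card C) * (\<Sum>c\<in>C. v c))"
proof (rule real_le_rsqrt)
  have "(\<Sum>c\<in>C. sqrt (v c))\<^sup>2 \<le> (\<Sum>c\<in>C. (sqrt (v c))\<^sup>2) * real (card C)"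
    by (rule sum_squared_le_sum_of_squares)
  also have "\<dots> = real (card C) * (\<Sum>c\<in>C. v c)"
    using assms by simp
  finally show "(\<Sum>c\<in>C. sqrt (v c))\<^sup>2 \<le> real (card C) * (\<Sum>c\<in>C. v c)" .
qed

lemma expectation_l1_empirical_mean_Pi_pmf_le:
  fixes f :: "'i \<Rightarrow> 'b::finite \<Rightarrow> 'c::finite \<Rightarrow> real"
  assumes I: "finite I" and B: "\<And>i b. i \<in> I \<Longrightarrow> (\<Sum>c\<in>UNIV. (f i b c)\<^sup>2) \<le> B"
  shows "measure_pmf.expectation (Pi_pmf I d p)
      (\<lambda>\<omega>. l1 (\<lambda>c. (\<Sum>i\<in>I. f i (\<omega> i) c) / real (card I))
               (\<lambda>c. (\<Sum>i\<in>I. measure_pmf.expectation (p i) (\<lambda>b. f i b c)) / real (card I)))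
    \<le> sqrt B / sqrt (real (card I)) * sqrt (real CARD('c))"
proof -
  define n where "n = real (card I)"
  define v where "v c = (\<Sum>i\<in>I. measure_pmf.expectation (p i) (\<lambda>b. (f i b c)\<^sup>2))" for c
  let ?dev = "\<lambda>\<omega> c. \<bar>\<Sum>i\<in>I. f i (\<omega> i) c - measure_pmf.expectation (p i) (\<lambda>b. f i b c)\<bar>"
  have l1_eq: "l1 (\<lambda>c. (\<Sum>i\<in>I. f i (\<omega> i) c) / n)
                  (\<lambda>c. (\<Sum>i\<in>I. measure_pmf.expectation (p i) (\<lambda>b. f i b c)) / n)
             = (\<Sum>c\<in>UNIV. ?dev \<omega> c) / n" for \<omega>
    unfolding l1_def n_def
    by (simp add: sum_divide_distrib[symmetric] diff_divide_distrib[symmetric] sum_subtractf)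
  have second_moments: "(\<Sum>c\<in>UNIV. v c) \<le> n * B"
  proof -
    have "(\<Sum>c\<in>UNIV. v c) = (\<Sum>i\<in>I. measure_pmf.expectation (p i) (\<lambda>b. \<Sum>c\<in>UNIV. (f i b c)\<^sup>2))"
      unfolding v_def by (subst sum.swap) simp
    also have "\<dots> \<le> (\<Sum>i\<in>I. measure_pmf.expectation (p i) (\<lambda>_. B))"
      by (intro sum_mono integral_mono) (simp_all add: B)
    finally show ?thesis
      by (simp add: n_def)
  qed
  have "measure_pmf.expectation (Pi_pmf I d p) (\<lambda>\<omega>. \<Sum>c\<in>UNIV. ?dev \<omega> c)
      = (\<Sum>c\<in>UNIV. measure_pmf.expectation (Pi_pmf I d p) (\<lambda>\<omega>. ?dev \<omega> c))"
    by (simp add: Bochner_Integration.integral_sum I)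
  also have "\<dots> \<le> (\<Sum>c\<in>UNIV. sqrt (v c))"
    unfolding v_def by (intro sum_mono expectation_abs_centered_sum_Pi_pmf_le I)
  also have "\<dots> \<le> sqrt (real CARD('c) * (\<Sum>c\<in>UNIV. v c))"
    by (rule sum_sqrt_le_sqrt_card_mult_sum) (simp add: v_def sum_nonneg)
  also have "\<dots> \<le> sqrt (real CARD('c) * (n * B))"
    using second_moments by (simp add: mult_left_mono)
  finally have deviation: "measure_pmf.expectation (Pi_pmf I d p) (\<lambda>\<omega>. \<Sum>c\<in>UNIV. ?dev \<omega> c)
      \<le> sqrt (real CARD('c) * (n * B))" .
  have "measure_pmf.expectation (Pi_pmf I d p)
      (\<lambda>\<omega>. l1 (\<lambda>c. (\<Sum>i\<in>I. f i (\<omega> i) c) / n)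
               (\<lambda>c. (\<Sum>i\<in>I. measure_pmf.expectation (p i) (\<lambda>b. f i b c)) / n))
      = measure_pmf.expectation (Pi_pmf I d p) (\<lambda>\<omega>. \<Sum>c\<in>UNIV. ?dev \<omega> c) / n"
    by (simp only: l1_eq) simp
  also have "\<dots> \<le> sqrt (real CARD('c) * (n * B)) / n"
    using deviation by (simp add: n_def divide_right_mono)
  also have "\<dots> = sqrt B / sqrt n * sqrt (real CARD('c))"
    by (cases "n = 0") (simp_all add: n_def real_sqrt_mult field_simps)
  finally show ?thesis
    unfolding n_def .
qed


section \<open>Empirical distributions of the N-agent system\<close>

lemma agents_eq_Sigma: "agents K N = (SIGMA k:{..<K}. {..<N k})"
  by (auto simp: agents_def)

lemma finite_agents [simp]: "finite (agents K N)"
  by (simp add: agents_eq_Sigma)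

lemma card_agents: "card (agents K N) = Npop K N"
  by (simp add: agents_eq_Sigma Npop_def card_SigmaI)

lemma fst_agents: "i \<in> agents K N \<Longrightarrow> fst i < K"
  by (auto simp: agents_def)

lemma sum_mult_card_fibres:
  fixes h :: "nat \<Rightarrow> 'a::finite"
  shows "(\<Sum>x\<in>UNIV. c x * real (card {j. j < M \<and> h j = x})) = (\<Sum>j<M. c (h j))"
proof -
  have "(\<Sum>x\<in>UNIV. \<Sum>j\<in>{j. j \<in> {..<M} \<and> h j = x}. c (h j)) = (\<Sum>j<M. c (h j))"
    by (rule sum.group) auto
  then show ?thesis
    by (simp add: mult.commute)
qed

lemma sum_emp_mult:
  fixes s :: "nat \<times> nat \<Rightarrow> 'x::finite"
  shows "(\<Sum>k<K. \<Sum>x\<in>UNIV. emp K N s x k * G k x)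
       = (\<Sum>i\<in>agents K N. G (fst i) (s i)) / real (Npop K N)"
proof -
  have "(\<Sum>x\<in>UNIV. emp K N s x k * G k x) = (\<Sum>j<N k. G k (s (k, j))) / real (Npop K N)" for k
    using sum_mult_card_fibres[of "G k" "N k" "\<lambda>j. s (k, j)"]
    by (simp add: emp_def sum_divide_distrib[symmetric] mult.commute)
  then show ?thesis
    by (simp add: agents_eq_Sigma sum.Sigma sum_divide_distrib case_prod_unfold)
qed

lemma marg_emp:
  fixes a :: "nat \<times> nat \<Rightarrow> 'u::finite"
  shows "marg K (emp K N a) u = (\<Sum>i\<in>agents K N. of_bool (a i = u)) / real (Npop K N)"
  using sum_emp_mult[of K N a "\<lambda>_ x. of_bool (x = u)"]
  by (simp add: marg_def)

lemma marg_nuMF: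
  fixes s :: "nat \<times> nat \<Rightarrow> 'x::finite"
  shows "marg K (nuMF K \<pi> (emp K N s)) u
       = (\<Sum>i\<in>agents K N. pmf (\<pi> (fst i) (s i) (marg K (emp K N s))) u) / real (Npop K N)"
  using sum_emp_mult[of K N s "\<lambda>k x. pmf (\<pi> k x (marg K (emp K N s))) u"]
  by (simp add: marg_def nuMF_def mult.commute)

lemma marg_PMF:
  fixes s :: "nat \<times> nat \<Rightarrow> 'x::finite"
  shows "marg K (PMF K P \<pi> (emp K N s)) x'
       = (\<Sum>i\<in>agents K N. \<Sum>u\<in>UNIV. pmf (\<pi> (fst i) (s i) (marg K (emp K N s))) u
           * pmf (P (fst i) (s i) u (marg K (emp K N s)) (marg K (nuMF K \<pi> (emp K N s)))) x')
         / real (Npop K N)"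
  unfolding marg_def PMF_def
  by (subst sum_emp_mult[symmetric]) (simp add: sum_distrib_left mult.assoc)

lemma sum_rMF:
  fixes s :: "nat \<times> nat \<Rightarrow> 'x::finite"
  shows "(\<Sum>k<K. rMF K r \<pi> (emp K N s) k)
       = (\<Sum>i\<in>agents K N. \<Sum>u\<in>UNIV. pmf (\<pi> (fst i) (s i) (marg K (emp K N s))) u
           * r (fst i) (s i) u (marg K (emp K N s)) (marg K (nuMF K \<pi> (emp K N s))))
         / real (Npop K N)"
  unfolding rMF_def
  by (subst sum_emp_mult[symmetric]) (simp add: sum_distrib_left mult.assoc)

lemma is_dist_marg_emp:
  fixes a :: "nat \<times> nat \<Rightarrow> 'u::finite"
  assumes "0 < Npop K N"
  shows "is_dist (marg K (emp K N a))"
proof -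
  have "(\<Sum>u\<in>UNIV. marg K (emp K N a) u)
      = (\<Sum>i\<in>agents K N. \<Sum>u\<in>UNIV. of_bool (a i = u)) / real (Npop K N)"
    unfolding marg_emp sum_divide_distrib[symmetric] by (subst sum.swap) (rule refl)
  also have "\<dots> = 1"
    using assms by (simp add: card_agents)
  finally have "sum (marg K (emp K N a)) UNIV = 1" .
  moreover have "0 \<le> marg K (emp K N a) u" for u
    by (simp add: marg_emp sum_nonneg)
  ultimately show ?thesis
    unfolding is_dist_def by simp
qed

lemma is_dist_marg_nuMF:
  fixes s :: "nat \<times> nat \<Rightarrow> 'x::finite" and \<pi> :: "nat \<Rightarrow> 'x \<Rightarrow> ('x \<Rightarrow> real) \<Rightarrow> 'u::finite pmf"
  assumes "0 < Npop K N"
  shows "is_dist (marg K (nuMF K \<pi> (emp K N s)))"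
proof -
  have "(\<Sum>u\<in>UNIV. marg K (nuMF K \<pi> (emp K N s)) u)
      = (\<Sum>i\<in>agents K N. \<Sum>u\<in>UNIV. pmf (\<pi> (fst i) (s i) (marg K (emp K N s))) u) / real (Npop K N)"
    by (simp add: marg_nuMF sum_divide_distrib[symmetric] sum.swap[of _ UNIV])
  also have "\<dots> = 1"
    using assms by (simp add: card_agents sum_pmf_eq_1)
  finally have "sum (marg K (nuMF K \<pi> (emp K N s))) UNIV = 1" .
  moreover have "0 \<le> marg K (nuMF K \<pi> (emp K N s)) u" for u
    by (simp add: marg_nuMF sum_nonneg)
  ultimately show ?thesis
    unfolding is_dist_def by simp
qed

lemma l1_nonneg: "0 \<le> l1 f g"
  unfolding l1_def by (simp add: sum_nonneg)

lemma l1_self [simp]: "l1 f f = 0"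
  by (simp add: l1_def)

lemma l1_triangle: "l1 f h \<le> l1 f g + l1 g h"
  unfolding l1_def sum.distrib[symmetric] by (intro sum_mono) linarith

lemma act_pmf_eq:
  "act_pmf K N pol t s = Pi_pmf (agents K N) undefined (\<lambda>i. pol t (fst i) (s i) (marg K (emp K N s)))"
  by (simp add: act_pmf_def case_prod_unfold)

lemma next_pmf_eq:
  "next_pmf K N P s a = Pi_pmf (agents K N) undefined
     (\<lambda>i. P (fst i) (s i) (a i) (marg K (emp K N s)) (marg K (emp K N a)))"
  by (simp add: next_pmf_def case_prod_unfold)

lemma expectation_joint_pmf_le:
  fixes P :: "nat \<Rightarrow> 'x::finite \<Rightarrow> 'u::finite \<Rightarrow> ('x \<Rightarrow> real) \<Rightarrow> ('u \<Rightarrow> real) \<Rightarrow> 'x pmf"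
    and H :: "_ \<Rightarrow> _ \<Rightarrow> _ \<Rightarrow> real"
  assumes "\<And>s a s'. 0 \<le> H s a s'"
    and "\<And>s. measure_pmf.expectation (act_pmf K N pol t s)
               (\<lambda>a. measure_pmf.expectation (next_pmf K N P s a) (\<lambda>s'. H s a s')) \<le> c"
  shows "measure_pmf.expectation (joint_pmf K N P pol init t) (\<lambda>(s, a, s'). H s a s') \<le> c"
  unfolding joint_pmf_def
proof (rule expectation_bind_pmf_le)
  fix s
  let ?step = "bind_pmf (act_pmf K N pol t s) (\<lambda>a. map_pmf (\<lambda>s'. (s, a, s')) (next_pmf K N P s a))"
  have "finite (set_pmf ?step)"
    by (simp add: act_pmf_eq next_pmf_eq finite_set_Pi_pmf)
  then show "integrable (measure_pmf ?step) (\<lambda>(s, a, s'). H s a s')"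
    by (rule integrable_measure_pmf_finite)
  show "measure_pmf.expectation ?step (\<lambda>(s, a, s'). H s a s') \<le> c"
    using assms(2)[of s]
    by (simp add: expectation_bind_pmf_finite act_pmf_eq next_pmf_eq finite_set_Pi_pmf)
qed (simp add: assms(1) case_prod_unfold)


section \<open>One-step deviation from the mean-field operators\<close>

lemma expectation_of_bool_eq: "measure_pmf.expectation q (\<lambda>b. of_bool (b = x)) = pmf q x"
  by (subst integral_measure_pmf_real[where A = "{x}"]) auto

lemma expectation_finite_type:
  "measure_pmf.expectation (q :: 'b::finite pmf) g = (\<Sum>b\<in>UNIV. pmf q b * g b)"
  by (subst integral_measure_pmf_real[where A = UNIV]) (auto simp: mult.commute)

lemma sum_square_of_bool_eq: "(\<Sum>u\<in>UNIV. (of_bool ((b :: 'a::finite) = u) :: real)\<^sup>2) = 1"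
  by (simp add: power2_eq_square flip: of_bool_conj)

lemma sum_pmf_square_le_1: "(\<Sum>x\<in>UNIV. (pmf (q :: 'x::finite pmf) x)\<^sup>2) \<le> 1"
proof -
  have "(\<Sum>x\<in>UNIV. (pmf q x)\<^sup>2) \<le> (\<Sum>x\<in>UNIV. pmf q x)"
    by (intro sum_mono) (simp add: power2_eq_square mult_left_le pmf_le_1)
  also have "\<dots> = 1"
    by (simp add: sum_pmf_eq_1)
  finally show ?thesis .
qed

lemma expectation_l1_action_marginal_le:
  fixes s :: "nat \<times> nat \<Rightarrow> 'x::finite" and pol :: "nat \<Rightarrow> nat \<Rightarrow> 'x \<Rightarrow> ('x \<Rightarrow> real) \<Rightarrow> 'u::finite pmf"
  shows "measure_pmf.expectation (act_pmf K N pol t s)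
      (\<lambda>a. l1 (marg K (emp K N a)) (marg K (nuMF K (pol t) (emp K N s))))
    \<le> 1 / sqrt (real (Npop K N)) * sqrt (real CARD('u))"
proof -
  let ?p = "\<lambda>i. pol t (fst i) (s i) (marg K (emp K N s))"
  have "marg K (emp K N a)
      = (\<lambda>u. (\<Sum>i\<in>agents K N. of_bool (a i = u)) / real (card (agents K N)))" for a :: "nat \<times> nat \<Rightarrow> 'u"
    by (simp add: fun_eq_iff marg_emp card_agents)
  moreover have "marg K (nuMF K (pol t) (emp K N s))
      = (\<lambda>u. (\<Sum>i\<in>agents K N. measure_pmf.expectation (?p i) (\<lambda>b. of_bool (b = u)))
              / real (card (agents K N)))"
    by (simp add: fun_eq_iff marg_nuMF card_agents expectation_of_bool_eq)
  ultimately show ?thesis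
    using expectation_l1_empirical_mean_Pi_pmf_le[of "agents K N" "\<lambda>i b u. of_bool (b = u)" 1 undefined ?p]
    by (simp add: act_pmf_eq card_agents sum_square_of_bool_eq)
qed

definition avg_reward ::
    "nat \<Rightarrow> (nat \<Rightarrow> nat) \<Rightarrow> (nat \<Rightarrow> 'x \<Rightarrow> 'u \<Rightarrow> ('x \<Rightarrow> real) \<Rightarrow> ('u \<Rightarrow> real) \<Rightarrow> real)
      \<Rightarrow> (nat \<times> nat \<Rightarrow> 'x) \<Rightarrow> (nat \<times> nat \<Rightarrow> 'u) \<Rightarrow> ('u \<Rightarrow> real) \<Rightarrow> real" where
  "avg_reward K N r s a \<nu> =
     (\<Sum>i\<in>agents K N. r (fst i) (s i) (a i) (marg K (emp K N s)) \<nu>) / real (Npop K N)"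

lemma abs_avg_reward_diff_le:
  fixes s :: "nat \<times> nat \<Rightarrow> 'x::finite"
  assumes n: "0 < Npop K N" and "is_dist \<nu>1" "is_dist \<nu>2"
    and r_lip: "\<forall>k<K. \<forall>x u mu1 nu1 mu2 nu2.
        is_dist mu1 \<longrightarrow> is_dist nu1 \<longrightarrow> is_dist mu2 \<longrightarrow> is_dist nu2 \<longrightarrow>
        \<bar>r k x u mu1 nu1 - r k x u mu2 nu2\<bar> \<le> L_R * (l1 mu1 mu2 + l1 nu1 nu2)"
  shows "\<bar>avg_reward K N r s a \<nu>1 - avg_reward K N r s a \<nu>2\<bar> \<le> L_R * l1 \<nu>1 \<nu>2"
proof -
  let ?m = "marg K (emp K N s)"
  have "\<bar>avg_reward K N r s a \<nu>1 - avg_reward K N r s a \<nu>2\<bar>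
      \<le> (\<Sum>i\<in>agents K N. \<bar>r (fst i) (s i) (a i) ?m \<nu>1 - r (fst i) (s i) (a i) ?m \<nu>2\<bar>) / real (Npop K N)"
    unfolding avg_reward_def diff_divide_distrib[symmetric] sum_subtractf[symmetric] abs_divide
    by (simp add: divide_right_mono sum_abs)
  also have "\<dots> \<le> (\<Sum>i\<in>agents K N. L_R * l1 \<nu>1 \<nu>2) / real (Npop K N)"
  proof (intro divide_right_mono sum_mono)
    fix i assume "i \<in> agents K N"
    with r_lip is_dist_marg_emp[OF n] assms(2,3)
    show "\<bar>r (fst i) (s i) (a i) ?m \<nu>1 - r (fst i) (s i) (a i) ?m \<nu>2\<bar> \<le> L_R * l1 \<nu>1 \<nu>2"
      by (metis fst_agents l1_self add_0)
  qed simp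
  also have "\<dots> = L_R * l1 \<nu>1 \<nu>2"
    using n by (simp add: card_agents)
  finally show ?thesis .
qed

lemma expectation_abs_avg_reward_mean_field_le:
  fixes s :: "nat \<times> nat \<Rightarrow> 'x::finite" and pol :: "nat \<Rightarrow> nat \<Rightarrow> 'x \<Rightarrow> ('x \<Rightarrow> real) \<Rightarrow> 'u::finite pmf"
  assumes n: "0 < Npop K N" and "0 \<le> M_R"
    and r_bound: "\<forall>k<K. \<forall>x u mu nu. is_dist mu \<longrightarrow> is_dist nu \<longrightarrow> \<bar>r k x u mu nu\<bar> \<le> M_R"
  shows "measure_pmf.expectation (act_pmf K N pol t s)
      (\<lambda>a. \<bar>avg_reward K N r s a (marg K (nuMF K (pol t) (emp K N s)))
             - (\<Sum>k<K. rMF K r (pol t) (emp K N s) k)\<bar>)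
    \<le> M_R / sqrt (real (Npop K N))"
proof -
  define n where "n = real (Npop K N)"
  let ?m = "marg K (emp K N s)" and ?\<nu> = "marg K (nuMF K (pol t) (emp K N s))"
  let ?p = "\<lambda>i. pol t (fst i) (s i) ?m" and ?g = "\<lambda>i b. r (fst i) (s i) b ?m ?\<nu>"
  have centered: "avg_reward K N r s a ?\<nu> - (\<Sum>k<K. rMF K r (pol t) (emp K N s) k)
      = (\<Sum>i\<in>agents K N. ?g i (a i) - measure_pmf.expectation (?p i) (?g i)) / n" for a
    by (simp add: n_def avg_reward_def sum_rMF expectation_finite_type sum_subtractf diff_divide_distrib)
  have second_moment: "measure_pmf.expectation (?p i) (\<lambda>b. (?g i b)\<^sup>2) \<le> M_R\<^sup>2" if "i \<in> agents K N" for i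
  proof -
    have "\<bar>?g i b\<bar> \<le> M_R" for b
      using r_bound fst_agents[OF that] is_dist_marg_emp[OF n] is_dist_marg_nuMF[OF n] by blast
    then have "(?g i b)\<^sup>2 \<le> M_R\<^sup>2" for b
      using power_mono[of "\<bar>?g i b\<bar>" M_R 2] by simp
    then have "measure_pmf.expectation (?p i) (\<lambda>b. (?g i b)\<^sup>2) \<le> measure_pmf.expectation (?p i) (\<lambda>_. M_R\<^sup>2)"
      by (intro integral_mono) simp_all
    then show ?thesis
      by simp
  qed
  have "measure_pmf.expectation (act_pmf K N pol t s)
      (\<lambda>a. \<bar>\<Sum>i\<in>agents K N. ?g i (a i) - measure_pmf.expectation (?p i) (?g i)\<bar>)
      \<le> sqrt (\<Sum>i\<in>agents K N. measure_pmf.expectation (?p i) (\<lambda>b. (?g i b)\<^sup>2))"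
    unfolding act_pmf_eq by (rule expectation_abs_centered_sum_Pi_pmf_le) simp
  also have "\<dots> \<le> sqrt (n * M_R\<^sup>2)"
  proof -
    have "(\<Sum>i\<in>agents K N. measure_pmf.expectation (?p i) (\<lambda>b. (?g i b)\<^sup>2))
        \<le> (\<Sum>i\<in>agents K N. M_R\<^sup>2)"
      by (intro sum_mono second_moment)
    then show ?thesis
      by (simp add: n_def card_agents)
  qed
  also have "\<dots> = sqrt n * M_R"
    using \<open>0 \<le> M_R\<close> by (simp add: real_sqrt_mult)
  finally have "measure_pmf.expectation (act_pmf K N pol t s)
      (\<lambda>a. \<bar>\<Sum>i\<in>agents K N. ?g i (a i) - measure_pmf.expectation (?p i) (?g i)\<bar>) / n
      \<le> sqrt n * M_R / n"
    by (simp add: n_def divide_right_mono)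
  also have "\<dots> = M_R / sqrt n"
    using n by (simp add: n_def field_simps)
  finally show ?thesis
    by (simp add: centered n_def)
qed

lemma expectation_reward_gap_le:
  fixes s :: "nat \<times> nat \<Rightarrow> 'x::finite" and pol :: "nat \<Rightarrow> nat \<Rightarrow> 'x \<Rightarrow> ('x \<Rightarrow> real) \<Rightarrow> 'u::finite pmf"
  assumes n: "0 < Npop K N" and "0 \<le> M_R" and "0 \<le> L_R"
    and r_bound: "\<forall>k<K. \<forall>x u mu nu. is_dist mu \<longrightarrow> is_dist nu \<longrightarrow> \<bar>r k x u mu nu\<bar> \<le> M_R"
    and r_lip: "\<forall>k<K. \<forall>x u mu1 nu1 mu2 nu2.
        is_dist mu1 \<longrightarrow> is_dist nu1 \<longrightarrow> is_dist mu2 \<longrightarrow> is_dist nu2 \<longrightarrow>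
        \<bar>r k x u mu1 nu1 - r k x u mu2 nu2\<bar> \<le> L_R * (l1 mu1 mu2 + l1 nu1 nu2)"
  shows "measure_pmf.expectation (act_pmf K N pol t s)
      (\<lambda>a. \<bar>1 / real (Npop K N) *
            (\<Sum>(k, j)\<in>agents K N. r k (s (k, j)) (a (k, j)) (marg K (emp K N s)) (marg K (emp K N a)))
          - (\<Sum>k<K. rMF K r (pol t) (emp K N s) k)\<bar>)
    \<le> (M_R + L_R) / sqrt (real (Npop K N)) * sqrt (real CARD('u))"
proof -
  define n where "n = real (Npop K N)"
  let ?\<nu> = "marg K (nuMF K (pol t) (emp K N s))" and ?R = "\<Sum>k<K. rMF K r (pol t) (emp K N s) k"
  have gap: "\<bar>1 / n * (\<Sum>(k, j)\<in>agents K N. r k (s (k, j)) (a (k, j)) (marg K (emp K N s)) (marg K (emp K N a)))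
        - ?R\<bar>
      \<le> L_R * l1 (marg K (emp K N a)) ?\<nu> + \<bar>avg_reward K N r s a ?\<nu> - ?R\<bar>" for a
  proof -
    have "1 / n * (\<Sum>(k, j)\<in>agents K N. r k (s (k, j)) (a (k, j)) (marg K (emp K N s)) (marg K (emp K N a)))
        = avg_reward K N r s a (marg K (emp K N a))"
      by (simp add: avg_reward_def n_def case_prod_unfold)
    then show ?thesis
      using abs_avg_reward_diff_le[OF n is_dist_marg_emp[OF n, where a = a]
          is_dist_marg_nuMF[OF n, where s = s and \<pi> = "pol t"] r_lip,
          where s = s and a = a]
      by linarith
  qed
  have "measure_pmf.expectation (act_pmf K N pol t s)
      (\<lambda>a. \<bar>1 / n * (\<Sum>(k, j)\<in>agents K N. r k (s (k, j)) (a (k, j)) (marg K (emp K N s)) (marg K (emp K N a)))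
          - ?R\<bar>)
    \<le> measure_pmf.expectation (act_pmf K N pol t s)
        (\<lambda>a. L_R * l1 (marg K (emp K N a)) ?\<nu> + \<bar>avg_reward K N r s a ?\<nu> - ?R\<bar>)"
    by (intro integral_mono gap) (simp_all add: act_pmf_eq)
  also have "\<dots> = L_R * measure_pmf.expectation (act_pmf K N pol t s) (\<lambda>a. l1 (marg K (emp K N a)) ?\<nu>)
      + measure_pmf.expectation (act_pmf K N pol t s) (\<lambda>a. \<bar>avg_reward K N r s a ?\<nu> - ?R\<bar>)"
    by (simp add: act_pmf_eq)
  also have "\<dots> \<le> L_R * (1 / sqrt n * sqrt (real CARD('u))) + M_R / sqrt n"
    using expectation_l1_action_marginal_le expectation_abs_avg_reward_mean_field_le[OF n \<open>0 \<le> M_R\<close> r_bound]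
    by (intro add_mono mult_left_mono) (simp_all add: n_def \<open>0 \<le> L_R\<close>)
  also have "\<dots> \<le> (M_R + L_R) / sqrt n * sqrt (real CARD('u))"
  proof -
    have "M_R \<le> M_R * sqrt (real CARD('u))"
      using \<open>0 \<le> M_R\<close> by (simp add: mult_le_cancel_left1)
    then have "M_R / sqrt n \<le> M_R * sqrt (real CARD('u)) / sqrt n"
      by (rule divide_right_mono) (simp add: n_def)
    then show ?thesis
      by (simp add: algebra_simps add_divide_distrib)
  qed
  finally show ?thesis
    unfolding n_def .
qed

text \<open>For \<open>\<nu>\<close> the empirical action marginal this is the conditional mean of the empirical
  next-state marginal; for \<open>\<nu>\<close> the mean-field action marginal its mean over the actions is
  the mean-field next-state marginal.\<close>

definition next_state_mean ::
    "nat \<Rightarrow> (nat \<Rightarrow> nat) \<Rightarrow> (nat \<Rightarrow> 'x \<Rightarrow> 'u \<Rightarrow> ('x \<Rightarrow> real) \<Rightarrow> ('u \<Rightarrow> real) \<Rightarrow> 'x pmf)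
      \<Rightarrow> (nat \<times> nat \<Rightarrow> 'x) \<Rightarrow> (nat \<times> nat \<Rightarrow> 'u) \<Rightarrow> ('u \<Rightarrow> real) \<Rightarrow> 'x \<Rightarrow> real" where
  "next_state_mean K N P s a \<nu> = (\<lambda>x'.
     (\<Sum>i\<in>agents K N. pmf (P (fst i) (s i) (a i) (marg K (emp K N s)) \<nu>) x') / real (Npop K N))"

lemma expectation_l1_next_state_marginal_le:
  fixes s :: "nat \<times> nat \<Rightarrow> 'x::finite" and a :: "nat \<times> nat \<Rightarrow> 'u::finite"
  shows "measure_pmf.expectation (next_pmf K N P s a)
      (\<lambda>s'. l1 (marg K (emp K N s')) (next_state_mean K N P s a (marg K (emp K N a))))
    \<le> 1 / sqrt (real (Npop K N)) * sqrt (real CARD('x))"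
proof -
  let ?q = "\<lambda>i. P (fst i) (s i) (a i) (marg K (emp K N s)) (marg K (emp K N a))"
  have "marg K (emp K N s')
      = (\<lambda>x'. (\<Sum>i\<in>agents K N. of_bool (s' i = x')) / real (card (agents K N)))" for s' :: "nat \<times> nat \<Rightarrow> 'x"
    by (simp add: fun_eq_iff marg_emp card_agents)
  moreover have "next_state_mean K N P s a (marg K (emp K N a))
      = (\<lambda>x'. (\<Sum>i\<in>agents K N. measure_pmf.expectation (?q i) (\<lambda>b. of_bool (b = x')))
              / real (card (agents K N)))"
    by (simp add: next_state_mean_def card_agents expectation_of_bool_eq)
  ultimately show ?thesis
    using expectation_l1_empirical_mean_Pi_pmf_le[of "agents K N" "\<lambda>i b x'. of_bool (b = x')" 1 undefined ?q]
    by (simp add: next_pmf_eq card_agents sum_square_of_bool_eq)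
qed

lemma l1_next_state_mean_le:
  fixes s :: "nat \<times> nat \<Rightarrow> 'x::finite" and a :: "nat \<times> nat \<Rightarrow> 'u::finite"
  assumes n: "0 < Npop K N" and "is_dist \<nu>1" "is_dist \<nu>2"
    and P_lip: "\<forall>k<K. \<forall>x u mu1 nu1 mu2 nu2.
        is_dist mu1 \<longrightarrow> is_dist nu1 \<longrightarrow> is_dist mu2 \<longrightarrow> is_dist nu2 \<longrightarrow>
        l1 (pmf (P k x u mu1 nu1)) (pmf (P k x u mu2 nu2)) \<le> L_P * (l1 mu1 mu2 + l1 nu1 nu2)"
  shows "l1 (next_state_mean K N P s a \<nu>1) (next_state_mean K N P s a \<nu>2) \<le> L_P * l1 \<nu>1 \<nu>2"
proof -
  let ?q = "\<lambda>\<nu> i. pmf (P (fst i) (s i) (a i) (marg K (emp K N s)) \<nu>)"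
  have "l1 (next_state_mean K N P s a \<nu>1) (next_state_mean K N P s a \<nu>2)
      \<le> (\<Sum>x'\<in>UNIV. \<Sum>i\<in>agents K N. \<bar>?q \<nu>1 i x' - ?q \<nu>2 i x'\<bar>) / real (Npop K N)"
    unfolding l1_def next_state_mean_def diff_divide_distrib[symmetric] sum_subtractf[symmetric]
      abs_divide sum_divide_distrib[symmetric]
    by (simp add: divide_right_mono sum_mono sum_abs)
  also have "\<dots> = (\<Sum>i\<in>agents K N. l1 (?q \<nu>1 i) (?q \<nu>2 i)) / real (Npop K N)"
    unfolding l1_def by (subst sum.swap) (rule refl)
  also have "\<dots> \<le> (\<Sum>i\<in>agents K N. L_P * l1 \<nu>1 \<nu>2) / real (Npop K N)"
  proof (intro divide_right_mono sum_mono)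
    fix i assume "i \<in> agents K N"
    with P_lip is_dist_marg_emp[OF n] assms(2,3)
    show "l1 (?q \<nu>1 i) (?q \<nu>2 i) \<le> L_P * l1 \<nu>1 \<nu>2"
      by (metis fst_agents l1_self add_0)
  qed simp
  also have "\<dots> = L_P * l1 \<nu>1 \<nu>2"
    using n by (simp add: card_agents)
  finally show ?thesis .
qed

lemma expectation_l1_next_state_mean_field_le:
  fixes s :: "nat \<times> nat \<Rightarrow> 'x::finite" and pol :: "nat \<Rightarrow> nat \<Rightarrow> 'x \<Rightarrow> ('x \<Rightarrow> real) \<Rightarrow> 'u::finite pmf"
  shows "measure_pmf.expectation (act_pmf K N pol t s)
      (\<lambda>a. l1 (next_state_mean K N P s a (marg K (nuMF K (pol t) (emp K N s))))
              (marg K (PMF K P (pol t) (emp K N s))))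
    \<le> 1 / sqrt (real (Npop K N)) * sqrt (real CARD('x))"
proof -
  let ?m = "marg K (emp K N s)" and ?\<nu> = "marg K (nuMF K (pol t) (emp K N s))"
  let ?p = "\<lambda>i. pol t (fst i) (s i) ?m" and ?h = "\<lambda>i b. pmf (P (fst i) (s i) b ?m ?\<nu>)"
  have "next_state_mean K N P s a ?\<nu>
      = (\<lambda>x'. (\<Sum>i\<in>agents K N. ?h i (a i) x') / real (card (agents K N)))" for a
    by (simp add: next_state_mean_def card_agents)
  moreover have "marg K (PMF K P (pol t) (emp K N s))
      = (\<lambda>x'. (\<Sum>i\<in>agents K N. measure_pmf.expectation (?p i) (\<lambda>b. ?h i b x'))
              / real (card (agents K N)))"
    by (simp add: fun_eq_iff marg_PMF card_agents expectation_finite_type)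
  ultimately show ?thesis
    using expectation_l1_empirical_mean_Pi_pmf_le[of "agents K N" ?h 1 undefined ?p]
    by (simp add: act_pmf_eq card_agents sum_pmf_square_le_1)
qed

lemma expectation_l1_state_marginal_given_actions_le:
  fixes s :: "nat \<times> nat \<Rightarrow> 'x::finite" and \<pi> :: "nat \<Rightarrow> 'x \<Rightarrow> ('x \<Rightarrow> real) \<Rightarrow> 'u::finite pmf"
  assumes n: "0 < Npop K N"
    and P_lip: "\<forall>k<K. \<forall>x u mu1 nu1 mu2 nu2.
        is_dist mu1 \<longrightarrow> is_dist nu1 \<longrightarrow> is_dist mu2 \<longrightarrow> is_dist nu2 \<longrightarrow>
        l1 (pmf (P k x u mu1 nu1)) (pmf (P k x u mu2 nu2)) \<le> L_P * (l1 mu1 mu2 + l1 nu1 nu2)"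
  defines "\<nu> \<equiv> marg K (nuMF K \<pi> (emp K N s))" and "Q \<equiv> marg K (PMF K P \<pi> (emp K N s))"
  shows "measure_pmf.expectation (next_pmf K N P s a) (\<lambda>s'. l1 (marg K (emp K N s')) Q)
    \<le> 1 / sqrt (real (Npop K N)) * sqrt (real CARD('x))
      + L_P * l1 (marg K (emp K N a)) \<nu> + l1 (next_state_mean K N P s a \<nu>) Q"
proof -
  let ?R = "next_state_mean K N P s a (marg K (emp K N a))" and ?S = "next_state_mean K N P s a \<nu>"
  have triangle: "l1 (marg K (emp K N s')) Q \<le> l1 (marg K (emp K N s')) ?R + l1 ?R ?S + l1 ?S Q" for s'
    by (meson add_mono l1_triangle order_trans order_refl)
  have "measure_pmf.expectation (next_pmf K N P s a) (\<lambda>s'. l1 (marg K (emp K N s')) Q)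
      \<le> measure_pmf.expectation (next_pmf K N P s a)
          (\<lambda>s'. l1 (marg K (emp K N s')) ?R + l1 ?R ?S + l1 ?S Q)"
    by (intro integral_mono triangle) (simp_all add: next_pmf_eq)
  also have "\<dots> = measure_pmf.expectation (next_pmf K N P s a) (\<lambda>s'. l1 (marg K (emp K N s')) ?R)
      + l1 ?R ?S + l1 ?S Q"
    by (simp add: next_pmf_eq)
  finally show ?thesis
    using expectation_l1_next_state_marginal_le[of K N P s a]
      l1_next_state_mean_le[OF n is_dist_marg_emp[OF n, where a = a]
        is_dist_marg_nuMF[OF n, where s = s and \<pi> = \<pi>] P_lip, where s = s and a = a]
    unfolding \<nu>_def by linarith
qed

lemma expectation_l1_state_marginal_le:
  fixes s :: "nat \<times> nat \<Rightarrow> 'x::finite" and pol :: "nat \<Rightarrow> nat \<Rightarrow> 'x \<Rightarrow> ('x \<Rightarrow> real) \<Rightarrow> 'u::finite pmf"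
  assumes n: "0 < Npop K N" and "0 \<le> L_P"
    and P_lip: "\<forall>k<K. \<forall>x u mu1 nu1 mu2 nu2.
        is_dist mu1 \<longrightarrow> is_dist nu1 \<longrightarrow> is_dist mu2 \<longrightarrow> is_dist nu2 \<longrightarrow>
        l1 (pmf (P k x u mu1 nu1)) (pmf (P k x u mu2 nu2)) \<le> L_P * (l1 mu1 mu2 + l1 nu1 nu2)"
  shows "measure_pmf.expectation (act_pmf K N pol t s)
      (\<lambda>a. measure_pmf.expectation (next_pmf K N P s a)
        (\<lambda>s'. l1 (marg K (emp K N s')) (marg K (PMF K P (pol t) (emp K N s)))))
    \<le> (2 + L_P) / sqrt (real (Npop K N)) * sqrt (real CARD('x) * real CARD('u))"
proof -
  define n where "n = real (Npop K N)"
  define c where "c = 1 / sqrt n * sqrt (real CARD('x))"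
  let ?\<nu> = "marg K (nuMF K (pol t) (emp K N s))" and ?Q = "marg K (PMF K P (pol t) (emp K N s))"
  let ?S = "\<lambda>a. next_state_mean K N P s a ?\<nu>"
  have "measure_pmf.expectation (act_pmf K N pol t s)
      (\<lambda>a. measure_pmf.expectation (next_pmf K N P s a) (\<lambda>s'. l1 (marg K (emp K N s')) ?Q))
    \<le> measure_pmf.expectation (act_pmf K N pol t s)
      (\<lambda>a. c + L_P * l1 (marg K (emp K N a)) ?\<nu> + l1 (?S a) ?Q)"
    unfolding c_def n_def
    by (intro integral_mono expectation_l1_state_marginal_given_actions_le[OF n P_lip])
      (simp_all add: act_pmf_eq)
  also have "\<dots> = c + L_P * measure_pmf.expectation (act_pmf K N pol t s) (\<lambda>a. l1 (marg K (emp K N a)) ?\<nu>)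
      + measure_pmf.expectation (act_pmf K N pol t s) (\<lambda>a. l1 (?S a) ?Q)"
    by (simp add: act_pmf_eq)
  also have "\<dots> \<le> c + L_P * (1 / sqrt n * sqrt (real CARD('u))) + c"
    using expectation_l1_action_marginal_le expectation_l1_next_state_mean_field_le
    by (intro add_mono mult_left_mono) (simp_all add: n_def c_def \<open>0 \<le> L_P\<close>)
  also have "\<dots> \<le> (2 + L_P) / sqrt n * sqrt (real CARD('x) * real CARD('u))"
  proof -
    have "sqrt (real CARD('x)) \<le> sqrt (real CARD('x) * real CARD('u))"
      and "sqrt (real CARD('u)) \<le> sqrt (real CARD('x) * real CARD('u))"
      by simp_all
    then have "2 * sqrt (real CARD('x)) + L_P * sqrt (real CARD('u))
        \<le> (2 + L_P) * sqrt (real CARD('x) * real CARD('u))"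
      using \<open>0 \<le> L_P\<close> by (simp add: distrib_right add_mono mult_left_mono)
    then have "(2 * sqrt (real CARD('x)) + L_P * sqrt (real CARD('u))) / sqrt n
        \<le> (2 + L_P) * sqrt (real CARD('x) * real CARD('u)) / sqrt n"
      by (rule divide_right_mono) (simp add: n_def)
    moreover have "0 < sqrt n"
      using n by (simp add: n_def)
    ultimately show ?thesis
      unfolding c_def by (simp add: field_simps)
  qed
  finally show ?thesis
    unfolding n_def .
qed

theorem lemma12:
  fixes K :: nat and N :: "nat \<Rightarrow> nat" and M_R L_R L_P :: real
    and r :: "nat \<Rightarrow> 'x::finite \<Rightarrow> 'u::finite \<Rightarrow> ('x \<Rightarrow> real) \<Rightarrow> ('u \<Rightarrow> real) \<Rightarrow> real"
    and P :: "nat \<Rightarrow> 'x \<Rightarrow> 'u \<Rightarrow> ('x \<Rightarrow> real) \<Rightarrow> ('u \<Rightarrow> real) \<Rightarrow> 'x pmf"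
    and pol :: "nat \<Rightarrow> nat \<Rightarrow> 'x \<Rightarrow> ('x \<Rightarrow> real) \<Rightarrow> 'u pmf"
    and init :: "(nat \<times> nat \<Rightarrow> 'x) pmf"
    and t :: nat
  assumes K_pos: "K \<ge> 1"
    and N_pos: "\<forall>k<K. N k \<ge> 1"
    and M_R_pos: "M_R > 0" and L_R_pos: "L_R > 0" and L_P_pos: "L_P > 0"
    and r_bound: "\<forall>k<K. \<forall>x u mu nu. is_dist mu \<longrightarrow> is_dist nu \<longrightarrow> \<bar>r k x u mu nu\<bar> \<le> M_R"
    and r_lip: "\<forall>k<K. \<forall>x u mu1 nu1 mu2 nu2.
        is_dist mu1 \<longrightarrow> is_dist nu1 \<longrightarrow> is_dist mu2 \<longrightarrow> is_dist nu2 \<longrightarrow>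
        \<bar>r k x u mu1 nu1 - r k x u mu2 nu2\<bar> \<le> L_R * (l1 mu1 mu2 + l1 nu1 nu2)"
    and P_lip: "\<forall>k<K. \<forall>x u mu1 nu1 mu2 nu2.
        is_dist mu1 \<longrightarrow> is_dist nu1 \<longrightarrow> is_dist mu2 \<longrightarrow> is_dist nu2 \<longrightarrow>
        l1 (pmf (P k x u mu1 nu1)) (pmf (P k x u mu2 nu2)) \<le> L_P * (l1 mu1 mu2 + l1 nu1 nu2)"
  shows
   "measure_pmf.expectation (joint_pmf K N P pol init t)
       (\<lambda>(s, a, s'). l1 (marg K (emp K N a)) (marg K (nuMF K (pol t) (emp K N s))))
      \<le> 1 / sqrt (real (Npop K N)) * sqrt (real CARD('u))
    \<and> measure_pmf.expectation (joint_pmf K N P pol init t)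
       (\<lambda>(s, a, s'). \<bar>1 / real (Npop K N) *
            (\<Sum>(k, j)\<in>agents K N. r k (s (k, j)) (a (k, j)) (marg K (emp K N s)) (marg K (emp K N a)))
          - (\<Sum>k<K. rMF K r (pol t) (emp K N s) k)\<bar>)
      \<le> (M_R + L_R) / sqrt (real (Npop K N)) * sqrt (real CARD('u))
    \<and> measure_pmf.expectation (joint_pmf K N P pol init t)
       (\<lambda>(s, a, s'). l1 (marg K (emp K N s')) (marg K (PMF K P (pol t) (emp K N s))))
      \<le> (2 + L_P) / sqrt (real (Npop K N)) * sqrt (real CARD('x) * real CARD('u))"
proof -
  have n: "0 < Npop K N"
    using K_pos N_pos member_le_sum[of 0 "{..<K}" N] by (fastforce simp: Npop_def)
  show ?thesis
    using expectation_l1_action_marginal_le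
      expectation_reward_gap_le[OF n _ _ r_bound r_lip] expectation_l1_state_marginal_le[OF n _ P_lip]
      M_R_pos L_R_pos L_P_pos
    by (intro conjI expectation_joint_pmf_le) (simp_all add: l1_nonneg)
qed

end
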